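(* Let $G=(V,E)$ be an undirected graph with $n$ vertices and positive integer vertex weights with maximum weight $W_{max}$. The expected time until DEMO constructs a $2$-approximate vertex cover (a vertex cover of weight at most twice the minimum weight of a vertex cover) is $O\big(n^3(\log n+\log W_{max})^2\big)$.
   Context: Weighted vertex cover: $G=(V,E)$, $V=\{v_1,\dots,v_n\}$, $w:V\to\mathbb{N}^+$; $OPT$ is the minimum weight of a vertex cover. Search points $x\in\{0,1\}^n$ ($v_i$ selected iff $x_i=1$). $Cost(x)=\sum_i w(v_i)x_i$. $G(x)=(V(x),E(x))$ with $V(x)=V\setminus\{v_i:x_i=1\}$, $E(x)$ = edges with no selected endpoint. $LP(x)$ = optimal value of: minimize $\sum_{v_i\in V(x)}w(v_i)y_i$ s.t. $y_i+y_j\ge1$ for $\{v_i,v_j\}\in E(x)$, $0\le y_i\le1$. $f(x)=(Cost(x),LP(x))$, $f(x)\le f(y)$ componentwise. DEMO: let $\delta=\frac{1}{2n}$ and define the box function $b(x)=(b_1(x),b_2(x))$ with $b_1(x)=\lceil\log_{1+\delta}(1+Cost(x))\rceil$, $b_2(x)=\lceil\log_{1+\delta}(1+LP(x))\rceil$. Start with $x\in\{0,1\}^n$ uniformly at random, $P=\{x\}$. Each iteration: choose $x\in P$ uniformly at random; create $x'$ by flipping each bit independently with probability $1/n$; if there is $y\in P$ with ($f(y)\le f(x')$ and $f(y)\ne f(x')$) or ($b(y)=b(x')$ and $Cost(y)+2LP(y)\le Cost(x')+2LP(x')$), discard $x'$; otherwise add $x'$ to $P$ and delete all other $z\in P$ with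 $f(x')\le f(z)$ or $b(z)=b(x')$. Time = number of iterations. *)

theory Defs
  imports "HOL-Probability.Probability"
begin

(* Vertices are 0..<n; a search point x is the set of selected vertices (x \<subseteq> {0..<n}).
   Edges are 2-element subsets of {0..<n}. Weights w :: nat \<Rightarrow> nat (positive on {0..<n}). *)

definition is_graph :: "nat \<Rightarrow> nat set set \<Rightarrow> bool" where
  "is_graph n E \<longleftrightarrow> (\<forall>e\<in>E. card e = 2 \<and> e \<subseteq> {0..<n})"

definition cost :: "(nat \<Rightarrow> nat) \<Rightarrow> nat set \<Rightarrow> nat" where
  "cost w x = (\<Sum>i\<in>x. w i)"

definition is_vertex_cover :: "nat \<Rightarrow> nat set set \<Rightarrow> nat set \<Rightarrow> bool" where
  "is_vertex_cover n E x \<longleftrightarrow> x \<subseteq> {0..<n} \<and> (\<forall>e\<in>E. e \<inter> x \<noteq> {})"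

definition OPT :: "nat \<Rightarrow> nat set set \<Rightarrow> (nat \<Rightarrow> nat) \<Rightarrow> nat" where
  "OPT n E w = Min (cost w ` {x. is_vertex_cover n E x})"

definition uncovered :: "nat set set \<Rightarrow> nat set \<Rightarrow> nat set set" where
  "uncovered E x = {e\<in>E. e \<inter> x = {}}"

(* optimal value of the LP relaxation on G(x) *)
definition LP :: "nat \<Rightarrow> nat set set \<Rightarrow> (nat \<Rightarrow> nat) \<Rightarrow> nat set \<Rightarrow> real" where
  "LP n E w x = Inf {(\<Sum>i\<in>{0..<n} - x. real (w i) * y i) | y.
       (\<forall>i. 0 \<le> y i \<and> y i \<le> 1) \<and> (\<forall>e\<in>uncovered E x. (\<Sum>i\<in>e. y i) \<ge> 1)}"

definition f_le :: "nat \<Rightarrow> nat set set \<Rightarrow> (nat \<Rightarrow> nat) \<Rightarrow> nat set \<Rightarrow> nat set \<Rightarrow> bool" where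
  "f_le n E w y x \<longleftrightarrow> cost w y \<le> cost w x \<and> LP n E w y \<le> LP n E w x"

definition f_eq :: "nat \<Rightarrow> nat set set \<Rightarrow> (nat \<Rightarrow> nat) \<Rightarrow> nat set \<Rightarrow> nat set \<Rightarrow> bool" where
  "f_eq n E w y x \<longleftrightarrow> cost w y = cost w x \<and> LP n E w y = LP n E w x"

definition box :: "nat \<Rightarrow> nat set set \<Rightarrow> (nat \<Rightarrow> nat) \<Rightarrow> nat set \<Rightarrow> int \<times> int" where
  "box n E w x = (let \<delta> = 1 / (2 * real n) in
     (\<lceil>log (1 + \<delta>) (1 + real (cost w x))\<rceil>, \<lceil>log (1 + \<delta>) (1 + LP n E w x)\<rceil>))"

definition discard :: "nat \<Rightarrow> nat set set \<Rightarrow> (nat \<Rightarrow> nat) \<Rightarrow> nat set set \<Rightarrow> nat set \<Rightarrow> bool" where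
  "discard n E w P x' \<longleftrightarrow> (\<exists>y\<in>P. (f_le n E w y x' \<and> \<not> f_eq n E w y x') \<or>
      (box n E w y = box n E w x' \<and>
       real (cost w y) + 2 * LP n E w y \<le> real (cost w x') + 2 * LP n E w x'))"

definition update :: "nat \<Rightarrow> nat set set \<Rightarrow> (nat \<Rightarrow> nat) \<Rightarrow> nat set set \<Rightarrow> nat set \<Rightarrow> nat set set" where
  "update n E w P x' = (if discard n E w P x' then P
     else insert x' {z\<in>P. z \<noteq> x' \<and> \<not> (f_le n E w x' z \<or> box n E w z = box n E w x')})"

definition mutate :: "nat \<Rightarrow> nat set \<Rightarrow> nat set pmf" where
  "mutate n x = map_pmf (\<lambda>F. {i. i < n \<and> ((i \<in> x) \<noteq> F i)})
                  (Pi_pmf {0..<n} False (\<lambda>_. bernoulli_pmf (1 / real n)))"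

definition demo_step :: "nat \<Rightarrow> nat set set \<Rightarrow> (nat \<Rightarrow> nat) \<Rightarrow> nat set set \<Rightarrow> nat set set pmf" where
  "demo_step n E w P = do { x \<leftarrow> pmf_of_set P; x' \<leftarrow> mutate n x; return_pmf (update n E w P x') }"

definition demo_init :: "nat \<Rightarrow> nat set set pmf" where
  "demo_init n = map_pmf (\<lambda>x. {x}) (pmf_of_set (Pow {0..<n}))"

definition goal :: "nat \<Rightarrow> nat set set \<Rightarrow> (nat \<Rightarrow> nat) \<Rightarrow> nat set set \<Rightarrow> bool" where
  "goal n E w P \<longleftrightarrow> (\<exists>x\<in>P. is_vertex_cover n E x \<and> cost w x \<le> 2 * OPT n E w)"

definition stopped_step :: "nat \<Rightarrow> nat set set \<Rightarrow> (nat \<Rightarrow> nat) \<Rightarrow> nat set set \<Rightarrow> nat set set pmf" where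
  "stopped_step n E w P = (if goal n E w P then return_pmf P else demo_step n E w P)"

primrec demo_pop :: "nat \<Rightarrow> nat set set \<Rightarrow> (nat \<Rightarrow> nat) \<Rightarrow> nat \<Rightarrow> nat set set pmf" where
  "demo_pop n E w 0 = demo_init n"
| "demo_pop n E w (Suc t) = demo_pop n E w t \<bind> stopped_step n E w"

(* expected number of iterations T until the population contains a 2-approximation:
   E[T] = \<Sum>_t Pr[T > t] *)
definition expected_time :: "nat \<Rightarrow> nat set set \<Rightarrow> (nat \<Rightarrow> nat) \<Rightarrow> ennreal" where
  "expected_time n E w =
     (\<Sum>t. ennreal (measure_pmf.prob (demo_pop n E w t) {P. \<not> goal n E w P}))"

end

theory Submission
  imports Defs
begin

text \<open>
  DEMO keeps at most one point per box, and its members are pairwise incomparable. Boxes are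
  monotone in Cost and LP, so the differences of the two box indices of the members are
  distinct; with B = O(n log (n W_max)) bounding the box indices for the base 1 + 1/(2n), the
  population has at most 2B + 1 members.

  Progress happens in two phases. While the empty set is missing, deleting the heaviest vertex
  from the member with the least cost box lowers that box by one. Once the empty set is present
  it stays (no other point has cost box 0), and LP(empty) <= OPT gives it Cost + 2 LP <= 2 OPT.
  An optimal half-integral solution y of the LP on G(x) has a vertex v maximising w(v) y(v), for
  which w(v) y(v) >= LP(x)/n and y(v) >= 1/2; adding v therefore lowers LP by at least LP(x)/n
  and by at least w(v)/2, so Cost + 2 LP does not grow while the LP box drops by one. A member
  with LP = 0 and Cost + 2 LP <= 2 OPT is a 2-approximate cover.

  Hence a potential with at most 2B + 1 values never increases and drops with probability at
  least 1/(e^2 n (2B + 1)) per step (choose the member, flip exactly one bit), and additive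
  drift bounds the expected time by e^2 n (2B + 1)^2 = O(n^3 (log n + log W_max)^2).
\<close>

lemma Min_image_attained:
  assumes "finite S" "S \<noteq> {}"
  obtains z where "z \<in> S" "Min (f ` S) = f z"
proof -
  have "Min (f ` S) \<in> f ` S" using assms by (intro Min_in) auto
  then show ?thesis using that by blast
qed

lemma ceiling_log_one_plus_nonneg: "1 < b \<Longrightarrow> 0 \<le> t \<Longrightarrow> 0 \<le> \<lceil>log b (1 + t)\<rceil>"
proof -
  assume "1 < b" "0 \<le> t"
  then have "0 \<le> log b (1 + t)" by (subst zero_le_log_cancel_iff) auto
  then show ?thesis by simp
qed

lemma ceiling_log_one_plus_mono:
  "1 < b \<Longrightarrow> 0 \<le> s \<Longrightarrow> s \<le> t \<Longrightarrow> \<lceil>log b (1 + s)\<rceil> \<le> \<lceil>log b (1 + t)\<rceil>"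
  by (intro ceiling_mono) simp

lemma ceiling_log_one_plus_le_0:
  assumes "1 < b" "0 \<le> t" "\<lceil>log b (1 + t)\<rceil> \<le> 0"
  shows "t = 0"
  using assms by simp

lemma ceiling_log_decrease:
  fixes a a' m :: real
  assumes m: "m \<ge> 1" and a: "a \<ge> 1" and a': "0 \<le> a'" and drop: "a \<le> m * (a - a')"
  shows "\<lceil>log (1 + 1/(2*m)) (1 + a')\<rceil> \<le> \<lceil>log (1 + 1/(2*m)) (1 + a)\<rceil> - 1"
proof -
  let ?b = "1 + 1/(2*m)"
  have b: "?b > 1" using m by simp
  have "a' \<le> a - a/m" using drop m by (simp add: field_simps)
  moreover have "(1 + a - a/m) * ?b = 1 + a - ((a - 1)/(2*m) + a/(2*m*m))"
    using m by (simp add: field_simps)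
  moreover have "0 \<le> (a - 1)/(2*m) + a/(2*m*m)" using a m by simp
  ultimately have "(1 + a') * ?b \<le> 1 + a"
    by (smt (verit, best) b mult_right_mono)
  moreover have "0 < (1 + a') * ?b" using b a' by (intro mult_pos_pos) linarith+
  ultimately have "log ?b ((1 + a') * ?b) \<le> log ?b (1 + a)"
    using b a by (simp only: log_le_cancel_iff)
  moreover have "log ?b ((1 + a') * ?b) = log ?b (1 + a') + log ?b ?b"
    using b a' by (intro log_mult_pos) linarith+
  moreover have "log ?b ?b = 1" using b by (intro log_eq_one) linarith+
  ultimately have "log ?b (1 + a') \<le> log ?b (1 + a) - 1" by linarith
  then show ?thesis using ceiling_mono by fastforce
qed

lemma log_one_plus_half_inverse_le:
  fixes m s :: real
  assumes m: "m \<ge> 1" and s: "s \<ge> 1"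
  shows "log (1 + 1/(2*m)) s \<le> 3 * m * ln s"
proof -
  have "1 / (3 * m) \<le> 1 / (2 * m + 1)" using m by (simp add: field_simps)
  also have "\<dots> = (1/(2*m)) / (1 + 1/(2*m))" using m by (simp add: field_simps)
  also have "\<dots> \<le> ln (1 + 1/(2*m))" using ln_add1_ge[of "1/(2*m)"] m by (simp add: add.commute)
  finally have base: "1 / (3 * m) \<le> ln (1 + 1/(2*m))" .
  have "0 < 1 / (3 * m)" using m by simp
  with base have "0 < ln (1 + 1/(2*m)) * (1 / (3 * m))" by (intro mult_pos_pos) linarith+
  then have "ln s / ln (1 + 1/(2*m)) \<le> ln s / (1 / (3 * m))"
    using base s by (intro divide_left_mono) auto
  then show ?thesis by (simp add: log_def mult.commute)
qed

lemma one_minus_inverse_power_ge: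
  assumes n: "(n::nat) \<ge> 2"
  shows "exp (-2) \<le> (1 - 1 / real n) ^ (n - 1)"
proof -
  let ?t = "1 / real n"
  have "- ?t - 2 * ?t\<^sup>2 \<le> ln (1 - ?t)" using n by (intro ln_one_minus_pos_lower_bound) auto
  moreover have "2 * ?t\<^sup>2 \<le> ?t" using n by (simp add: power2_eq_square field_simps)
  ultimately have ln_ge: "- 2 * ?t \<le> ln (1 - ?t)" by linarith
  have "-2 \<le> real (n - 1) * (- 2 * ?t)" using n by (simp add: field_simps)
  also have "\<dots> \<le> real (n - 1) * ln (1 - ?t)" using ln_ge by (intro mult_left_mono) auto
  finally have "exp (-2) \<le> exp (real (n - 1) * ln (1 - ?t))" by simp
  also have "\<dots> = (1 - ?t) ^ (n - 1)" using n by (subst exp_of_nat_mult) simp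
  finally show ?thesis .
qed

section \<open>Additive drift\<close>

lemma drift_from_progress:
  fixes g :: "'a \<Rightarrow> nat" and D :: "'a pmf" and q :: real
  assumes mono: "\<And>Q. Q \<in> set_pmf D \<Longrightarrow> g Q \<le> g P"
    and progress: "q \<le> measure_pmf.prob D {Q. g Q < g P}" and q: "q > 0"
  shows "(\<integral>\<^sup>+Q. ennreal (real (g Q) / q) \<partial>D) + 1 \<le> ennreal (real (g P) / q)"
proof -
  let ?S = "{Q. g Q < g P}"
  have pointwise: "ennreal (real (g Q) / q) + ennreal (1 / q) * indicator ?S Q \<le> ennreal (real (g P) / q)"
    if "Q \<in> set_pmf D" for Q
  proof (cases "Q \<in> ?S")
    case True
    then have "real (g Q) / q + 1 / q \<le> real (g P) / q" using q by (simp add: add_divide_distrib[symmetric] divide_right_mono)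
    then show ?thesis using True q by (simp add: ennreal_plus[symmetric] del: ennreal_plus)
  next
    case False
    then show ?thesis using mono[OF that] q by (simp add: divide_right_mono)
  qed
  have "1 \<le> ennreal (1 / q) * ennreal q" using q by (simp add: ennreal_mult[symmetric])
  also have "\<dots> \<le> ennreal (1 / q) * emeasure D ?S"
    using progress by (intro mult_left_mono) (simp_all add: measure_pmf.emeasure_eq_measure)
  finally have "(\<integral>\<^sup>+Q. ennreal (real (g Q) / q) \<partial>D) + 1
      \<le> (\<integral>\<^sup>+Q. ennreal (real (g Q) / q) \<partial>D) + ennreal (1 / q) * emeasure D ?S"
    by (rule add_left_mono)
  also have "\<dots> = (\<integral>\<^sup>+Q. ennreal (real (g Q) / q) + ennreal (1 / q) * indicator ?S Q \<partial>D)"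
    by (subst nn_integral_add) (auto simp: nn_integral_cmult_indicator)
  also have "\<dots> \<le> (\<integral>\<^sup>+Q. ennreal (real (g P) / q) \<partial>D)"
    by (intro nn_integral_mono_AE AE_pmfI pointwise)
  also have "\<dots> = ennreal (real (g P) / q)" by (simp add: measure_pmf.emeasure_space_1)
  finally show ?thesis .
qed

lemma hitting_time_le_initial_potential:
  fixes p :: "nat \<Rightarrow> 'a pmf" and K :: "'a \<Rightarrow> 'a pmf" and h :: "'a \<Rightarrow> ennreal"
  assumes p_Suc: "\<And>t. p (Suc t) = p t \<bind> K"
    and drift: "\<And>t P. P \<in> set_pmf (p t) \<Longrightarrow> (\<integral>\<^sup>+Q. h Q \<partial>K P) + indicator A P \<le> h P"
  shows "(\<Sum>t. ennreal (measure_pmf.prob (p t) A)) \<le> (\<integral>\<^sup>+P. h P \<partial>p 0)"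
proof (rule suminf_le_const[OF summableI])
  have partial: "(\<Sum>t<k. ennreal (measure_pmf.prob (p t) A)) + (\<integral>\<^sup>+P. h P \<partial>p k) \<le> (\<integral>\<^sup>+P. h P \<partial>p 0)"
    for k
  proof (induction k)
    case (Suc k)
    have "ennreal (measure_pmf.prob (p k) A) + (\<integral>\<^sup>+P. h P \<partial>p (Suc k))
        = (\<integral>\<^sup>+P. indicator A P \<partial>p k) + (\<integral>\<^sup>+P. (\<integral>\<^sup>+Q. h Q \<partial>K P) \<partial>p k)"
      by (simp add: p_Suc measure_pmf.emeasure_eq_measure[symmetric])
    also have "\<dots> = (\<integral>\<^sup>+P. (\<integral>\<^sup>+Q. h Q \<partial>K P) + indicator A P \<partial>p k)"
      by (subst nn_integral_add[symmetric]) (auto simp: add.commute)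
    also have "\<dots> \<le> (\<integral>\<^sup>+P. h P \<partial>p k)"
      by (intro nn_integral_mono_AE AE_pmfI drift)
    finally have "ennreal (measure_pmf.prob (p k) A) + (\<integral>\<^sup>+P. h P \<partial>p (Suc k)) \<le> (\<integral>\<^sup>+P. h P \<partial>p k)" .
    then have "(\<Sum>t<Suc k. ennreal (measure_pmf.prob (p t) A)) + (\<integral>\<^sup>+P. h P \<partial>p (Suc k))
        \<le> (\<Sum>t<k. ennreal (measure_pmf.prob (p t) A)) + (\<integral>\<^sup>+P. h P \<partial>p k)"
      by (simp only: sum.lessThan_Suc add.assoc add_left_mono)
    then show ?case using Suc.IH by (rule order_trans)
  qed simp
  show "(\<Sum>t<k. ennreal (measure_pmf.prob (p t) A)) \<le> (\<integral>\<^sup>+P. h P \<partial>p 0)" for k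
    using partial[of k] by (rule order_trans[rotated]) simp
qed

definition flip :: "nat \<Rightarrow> nat set \<Rightarrow> nat \<Rightarrow> nat set" where
  "flip n x i = {j. j < n \<and> ((j \<in> x) \<noteq> (j = i))}"

lemma flip_insert: "x \<subseteq> {0..<n} \<Longrightarrow> i < n \<Longrightarrow> i \<notin> x \<Longrightarrow> flip n x i = insert i x"
  unfolding flip_def by auto

lemma flip_remove: "x \<subseteq> {0..<n} \<Longrightarrow> i \<in> x \<Longrightarrow> flip n x i = x - {i}"
  unfolding flip_def by auto

lemma pmf_mutate_flip_ge:
  assumes n: "n \<ge> 2" and i: "i < n"
  shows "exp (-2) / real n \<le> pmf (mutate n x) (flip n x i)"
proof -
  let ?p = "1 / real n"
  let ?M = "Pi_pmf {0..<n} False (\<lambda>_. bernoulli_pmf ?p)"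
  have p: "0 \<le> ?p" "?p \<le> 1" using n by auto
  have "measure ?M {\<lambda>j. j = i} = (\<Prod>j\<in>{0..<n}. pmf (bernoulli_pmf ?p) (j = i))"
    unfolding measure_pmf_single using i by (subst pmf_Pi') auto
  also have "\<dots> = ?p * (\<Prod>j\<in>{0..<n} - {i}. 1 - ?p)"
    using i p by (subst prod.remove[of _ i]) (auto intro!: prod.cong)
  also have "\<dots> = ?p * (1 - ?p) ^ (n - 1)" using i by simp
  finally have single: "measure ?M {\<lambda>j. j = i} = ?p * (1 - ?p) ^ (n - 1)" .
  have "exp (-2) / real n \<le> ?p * (1 - ?p) ^ (n - 1)"
    using one_minus_inverse_power_ge[OF n] by (simp add: divide_right_mono)
  also have "\<dots> \<le> measure ?M ((\<lambda>F. {j. j < n \<and> ((j \<in> x) \<noteq> F j)}) -` {flip n x i})"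
    unfolding single[symmetric] flip_def by (intro measure_pmf.finite_measure_mono) auto
  also have "\<dots> = pmf (mutate n x) (flip n x i)" unfolding mutate_def by (simp add: pmf_map)
  finally show ?thesis .
qed

section \<open>The LP relaxation of weighted vertex cover\<close>

locale weighted_graph =
  fixes n :: nat and E :: "nat set set" and w :: "nat \<Rightarrow> nat"
  assumes graph: "is_graph n E" and weight_pos: "\<And>i. i < n \<Longrightarrow> w i > 0"
begin

abbreviation V :: "nat set" where "V \<equiv> {0..<n}"

definition lp_feasible :: "nat set \<Rightarrow> (nat \<Rightarrow> real) \<Rightarrow> bool" where
  "lp_feasible x y \<longleftrightarrow> (\<forall>i. 0 \<le> y i \<and> y i \<le> 1) \<and> (\<forall>e\<in>uncovered E x. 1 \<le> (\<Sum>i\<in>e. y i))"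

definition lp_objective :: "nat set \<Rightarrow> (nat \<Rightarrow> real) \<Rightarrow> real" where
  "lp_objective x y = (\<Sum>i\<in>V - x. real (w i) * y i)"

lemma LP_eq_Inf: "LP n E w x = Inf (lp_objective x ` {y. lp_feasible x y})"
  unfolding LP_def lp_objective_def lp_feasible_def by (rule arg_cong[where f = Inf]) blast

lemma edgeE:
  assumes "e \<in> E"
  obtains a b where "e = {a, b}" "a \<noteq> b" "a < n" "b < n"
proof -
  from graph assms have "card e = 2" and "e \<subseteq> V" by (auto simp: is_graph_def)
  then show ?thesis using that by (auto simp: card_2_iff)
qed

lemma lp_feasible_one: "lp_feasible x (\<lambda>_. 1)"
  unfolding lp_feasible_def uncovered_def by (auto elim: edgeE)

lemma lp_feasible_insert: "lp_feasible x y \<Longrightarrow> lp_feasible (insert i x) y"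
  unfolding lp_feasible_def uncovered_def by auto

lemma lp_objective_nonneg: "lp_feasible x y \<Longrightarrow> 0 \<le> lp_objective x y"
  unfolding lp_objective_def lp_feasible_def by (auto intro!: sum_nonneg)

lemma LP_le_objective: "lp_feasible x y \<Longrightarrow> LP n E w x \<le> lp_objective x y"
  unfolding LP_eq_Inf
  by (rule cInf_lower) (auto intro!: bdd_belowI[where m = 0] lp_objective_nonneg)

lemma LP_greatest: "(\<And>y. lp_feasible x y \<Longrightarrow> c \<le> lp_objective x y) \<Longrightarrow> c \<le> LP n E w x"
  unfolding LP_eq_Inf using lp_feasible_one by (intro cInf_greatest) auto

lemma LP_nonneg: "0 \<le> LP n E w x"
  using LP_greatest lp_objective_nonneg by blast

lemma LP_eq_0_if_covered:
  assumes "uncovered E x = {}"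
  shows "LP n E w x = 0"
proof -
  have "lp_feasible x (\<lambda>_. 0)" using assms unfolding lp_feasible_def by auto
  then have "LP n E w x \<le> 0" using LP_le_objective by (fastforce simp: lp_objective_def)
  with LP_nonneg show ?thesis by (rule order.antisym[rotated])
qed

lemma LP_ge_1_if_uncovered:
  assumes "uncovered E x \<noteq> {}"
  shows "1 \<le> LP n E w x"
proof (rule LP_greatest)
  fix y assume y: "lp_feasible x y"
  from assms obtain e where e: "e \<in> E" "e \<inter> x = {}" unfolding uncovered_def by auto
  then obtain a b where ab: "e = {a, b}" "a \<noteq> b" "a < n" "b < n" by (auto elim: edgeE)
  have "1 \<le> y a + y b" using y e ab unfolding lp_feasible_def uncovered_def by auto
  also have "\<dots> \<le> real (w a) * y a + real (w b) * y b"
  proof -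
    have "y i \<le> real (w i) * y i" if "i < n" for i
      using weight_pos[OF that] mult_right_mono[of 1 "real (w i)" "y i"] y
      by (simp add: lp_feasible_def)
    then show ?thesis using ab by (simp add: add_mono)
  qed
  also have "\<dots> = (\<Sum>i\<in>{a, b}. real (w i) * y i)" using ab by simp
  also have "\<dots> \<le> lp_objective x y" unfolding lp_objective_def
    using ab e y by (intro sum_mono2) (auto simp: lp_feasible_def)
  finally show "1 \<le> lp_objective x y" .
qed

lemma is_vertex_cover_V: "is_vertex_cover n E V"
  unfolding is_vertex_cover_def by (fastforce elim: edgeE)

lemma OPT_attained:
  obtains C where "is_vertex_cover n E C" "cost w C = OPT n E w"
proof -
  have "finite {x. is_vertex_cover n E x}"
    by (rule finite_subset[of _ "Pow V"]) (auto simp: is_vertex_cover_def)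
  then have "OPT n E w \<in> cost w ` {x. is_vertex_cover n E x}"
    unfolding OPT_def using is_vertex_cover_V by (intro Min_in) auto
  then show ?thesis using that by auto
qed

lemma LP_empty_le_OPT: "LP n E w {} \<le> real (OPT n E w)"
proof -
  obtain C where C: "is_vertex_cover n E C" "cost w C = OPT n E w" by (rule OPT_attained)
  let ?y = "\<lambda>i. if i \<in> C then 1 else 0 :: real"
  have "lp_feasible {} ?y"
  proof -
    have "1 \<le> (\<Sum>i\<in>e. ?y i)" if "e \<in> E" for e
    proof -
      obtain a b where "e = {a, b}" "a \<noteq> b" using \<open>e \<in> E\<close> by (auto elim: edgeE)
      moreover have "e \<inter> C \<noteq> {}" using C \<open>e \<in> E\<close> unfolding is_vertex_cover_def by auto
      ultimately show ?thesis by auto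
    qed
    then show ?thesis unfolding lp_feasible_def uncovered_def by auto
  qed
  then have "LP n E w {} \<le> lp_objective {} ?y" by (rule LP_le_objective)
  also have "\<dots> = (\<Sum>i\<in>V \<inter> C. real (w i))"
    unfolding lp_objective_def sum.inter_restrict[OF finite_atLeastLessThan] by (intro sum.cong) auto
  also have "\<dots> = (\<Sum>i\<in>C. real (w i))"
    using C(1) unfolding is_vertex_cover_def by (simp add: Int_absorb1)
  also have "\<dots> = real (OPT n E w)" using C(2) unfolding cost_def by (metis of_nat_sum)
  finally show ?thesis .
qed

definition half_integral :: "real \<Rightarrow> bool" where
  "half_integral t \<longleftrightarrow> t = 0 \<or> t = 1/2 \<or> t = 1"

definition half_shift :: "nat set \<Rightarrow> (nat \<Rightarrow> real) \<Rightarrow> real \<Rightarrow> nat \<Rightarrow> real" where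
  "half_shift F y u i = (if i \<in> F then if y i < 1/2 then y i + u else y i - u else y i)"

lemma lp_feasible_half_shift:
  assumes y: "lp_feasible x y" and F: "F = {i \<in> V - x. \<not> half_integral (y i)}"
    and small: "\<And>i. i \<in> F \<Longrightarrow> y i < 1/2 \<Longrightarrow> 0 \<le> y i + u \<and> y i + u \<le> 1/2"
    and large: "\<And>i. i \<in> F \<Longrightarrow> y i > 1/2 \<Longrightarrow> 1/2 \<le> y i - u \<and> y i - u \<le> 1"
  shows "lp_feasible x (half_shift F y u)"
proof -
  let ?z = "half_shift F y u"
  have y01: "0 \<le> y i \<and> y i \<le> 1" for i using y unfolding lp_feasible_def by auto
  have shape: "(?z i = y i \<and> (y i = 0 \<or> y i = 1/2 \<or> y i = 1))
      \<or> (0 < y i \<and> y i < 1/2 \<and> ?z i = y i + u \<and> 0 \<le> ?z i \<and> ?z i \<le> 1/2)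
      \<or> (1/2 < y i \<and> y i < 1 \<and> ?z i = y i - u \<and> 1/2 \<le> ?z i \<and> ?z i \<le> 1)"
    if "i \<in> V - x" for i
  proof (cases "i \<in> F")
    case True
    then have "y i \<noteq> 0" "y i \<noteq> 1/2" "y i \<noteq> 1" using F by (auto simp: half_integral_def)
    then show ?thesis using True small large y01[of i] by (auto simp: half_shift_def)
  next
    case False
    then show ?thesis using F that by (auto simp: half_shift_def half_integral_def)
  qed
  have "0 \<le> ?z i \<and> ?z i \<le> 1" for i
    using shape[of i] y01[of i] F by (cases "i \<in> V - x") (auto simp: half_shift_def)
  \<comment> \<open>On an edge a coordinate below 1/2 forces its partner above 1/2, and the two move by
      opposite amounts, so the edge constraint survives the shift.\<close>
  moreover have "1 \<le> (\<Sum>i\<in>e. ?z i)" if e: "e \<in> uncovered E x" for e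
  proof -
    obtain a b where ab: "e = {a, b}" "a \<noteq> b" "a < n" "b < n"
      using e unfolding uncovered_def by (auto elim: edgeE)
    have "a \<in> V - x" "b \<in> V - x" using ab e unfolding uncovered_def by auto
    moreover have "1 \<le> y a + y b" using y e ab unfolding lp_feasible_def by auto
    ultimately have "1 \<le> ?z a + ?z b"
      using shape[of a] shape[of b] y01[of a] y01[of b] by (elim disjE conjE) linarith+
    then show ?thesis using ab by simp
  qed
  ultimately show ?thesis unfolding lp_feasible_def by auto
qed

lemma lp_objective_half_shift:
  assumes F: "F \<subseteq> V - x"
  shows "lp_objective x (half_shift F y u) = lp_objective x y
    + u * ((\<Sum>i\<in>{i\<in>F. y i < 1/2}. real (w i)) - (\<Sum>i\<in>{i\<in>F. \<not> y i < 1/2}. real (w i)))"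
proof -
  let ?A = "V - x"
  have "lp_objective x (half_shift F y u) - lp_objective x y
      = (\<Sum>i\<in>?A. (if i \<in> F \<and> y i < 1/2 then u * real (w i) else 0)
                 - (if i \<in> F \<and> \<not> y i < 1/2 then u * real (w i) else 0))"
    unfolding lp_objective_def sum_subtractf[symmetric]
    by (intro sum.cong) (auto simp: half_shift_def algebra_simps)
  also have "\<dots> = (\<Sum>i\<in>{i\<in>?A. i \<in> F \<and> y i < 1/2}. u * real (w i))
                 - (\<Sum>i\<in>{i\<in>?A. i \<in> F \<and> \<not> y i < 1/2}. u * real (w i))"
    by (subst (1 2) sum.inter_filter) (auto simp: sum_subtractf)
  also have "{i\<in>?A. i \<in> F \<and> y i < 1/2} = {i\<in>F. y i < 1/2}" using F by auto
  also have "{i\<in>?A. i \<in> F \<and> \<not> y i < 1/2} = {i\<in>F. \<not> y i < 1/2}" using F by auto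
  finally show ?thesis by (simp add: sum_distrib_left right_diff_distrib)
qed

lemma lp_solution_fewer_nonhalf:
  assumes y: "lp_feasible x y" and F: "F = {i \<in> V - x. \<not> half_integral (y i)}" and "F \<noteq> {}"
  obtains z where "lp_feasible x z" "lp_objective x z \<le> lp_objective x y"
    "card {i \<in> V - x. \<not> half_integral (z i)} < card F"
proof -
  have finF: "finite F" unfolding F by simp
  have inF: "0 < y i \<and> y i < 1 \<and> y i \<noteq> 1/2" if "i \<in> F" for i
  proof -
    have "0 \<le> y i \<and> y i \<le> 1" using y unfolding lp_feasible_def by blast
    moreover have "\<not> half_integral (y i)" using that unfolding F by blast
    ultimately show ?thesis unfolding half_integral_def by linarith
  qed
  define Ws where "Ws = (\<Sum>i\<in>{i\<in>F. y i < 1/2}. real (w i))"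
  define Wl where "Wl = (\<Sum>i\<in>{i\<in>F. \<not> y i < 1/2}. real (w i))"
  have shift_obj: "lp_objective x (half_shift F y u) = lp_objective x y + u * (Ws - Wl)" for u
    unfolding Ws_def Wl_def by (rule lp_objective_half_shift) (auto simp: F)
  have fewer: "card {i \<in> V - x. \<not> half_integral (half_shift F y u i)} < card F"
    if i0: "i0 \<in> F" "half_integral (half_shift F y u i0)" for u i0
  proof -
    have "{i \<in> V - x. \<not> half_integral (half_shift F y u i)} \<subseteq> F - {i0}"
    proof
      fix i assume i: "i \<in> {i \<in> V - x. \<not> half_integral (half_shift F y u i)}"
      then have "i \<in> F" unfolding F by (auto simp: half_shift_def split: if_splits)
      moreover have "i \<noteq> i0" using i i0(2) by blast
      ultimately show "i \<in> F - {i0}" by blast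
    qed
    then show ?thesis using i0(1) finF by (meson card_Diff1_less card_mono finite_Diff le_less_trans)
  qed
  \<comment> \<open>Shift every fractional coordinate towards 1/2 or away from it, whichever does not
      increase the objective, until the first coordinate becomes half-integral.\<close>
  consider "Ws \<le> Wl" | "Wl < Ws" by linarith
  then show ?thesis
  proof cases
    case 1
    obtain i0 where i0: "i0 \<in> F" and least: "\<And>i. i \<in> F \<Longrightarrow> \<bar>y i0 - 1/2\<bar> \<le> \<bar>y i - 1/2\<bar>"
      using arg_min_if_finite[OF finF \<open>F \<noteq> {}\<close>, of "\<lambda>i. \<bar>y i - 1/2\<bar>"] by (metis not_le)
    let ?t = "\<bar>y i0 - 1/2\<bar>"
    have "lp_feasible x (half_shift F y ?t)"
    proof (rule lp_feasible_half_shift[OF y F])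
      fix i assume "i \<in> F"
      then show "y i < 1/2 \<Longrightarrow> 0 \<le> y i + ?t \<and> y i + ?t \<le> 1/2"
        and "y i > 1/2 \<Longrightarrow> 1/2 \<le> y i - ?t \<and> y i - ?t \<le> 1"
        using least[of i] inF[of i] by auto
    qed
    moreover have "lp_objective x (half_shift F y ?t) \<le> lp_objective x y"
      using 1 by (simp add: shift_obj mult_nonneg_nonpos)
    moreover have "half_integral (half_shift F y ?t i0)"
      using i0 inF[OF i0] by (auto simp: half_shift_def half_integral_def)
    ultimately show ?thesis using that fewer[OF i0] by blast
  next
    case 2
    obtain i0 where i0: "i0 \<in> F"
      and least: "\<And>i. i \<in> F \<Longrightarrow> min (y i0) (1 - y i0) \<le> min (y i) (1 - y i)"
      using arg_min_if_finite[OF finF \<open>F \<noteq> {}\<close>, of "\<lambda>i. min (y i) (1 - y i)"] by (metis not_le)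
    let ?t = "min (y i0) (1 - y i0)"
    have "lp_feasible x (half_shift F y (- ?t))"
    proof (rule lp_feasible_half_shift[OF y F])
      fix i assume "i \<in> F"
      then show "y i < 1/2 \<Longrightarrow> 0 \<le> y i + - ?t \<and> y i + - ?t \<le> 1/2"
        and "y i > 1/2 \<Longrightarrow> 1/2 \<le> y i - - ?t \<and> y i - - ?t \<le> 1"
        using least[of i] inF[of i] inF[OF i0] by (auto simp: min_def)
    qed
    moreover have "lp_objective x (half_shift F y (- ?t)) \<le> lp_objective x y"
      using 2 inF[OF i0] by (simp add: shift_obj)
    moreover have "half_integral (half_shift F y (- ?t) i0)"
      using i0 inF[OF i0] by (auto simp: half_shift_def half_integral_def min_def)
    ultimately show ?thesis using that fewer[OF i0] by blast
  qed
qed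

lemma lp_solution_half_integral:
  assumes "lp_feasible x y"
  obtains z where "lp_feasible x z" "lp_objective x z \<le> lp_objective x y"
    "\<And>i. i \<in> V - x \<Longrightarrow> half_integral (z i)"
  using assms
proof (induction "card {i \<in> V - x. \<not> half_integral (y i)}" arbitrary: y rule: less_induct)
  case less
  show ?case
  proof (cases "{i \<in> V - x. \<not> half_integral (y i)} = {}")
    case True
    then show ?thesis using less.prems by blast
  next
    case False
    then obtain z where z: "lp_feasible x z" "lp_objective x z \<le> lp_objective x y"
      "card {i \<in> V - x. \<not> half_integral (z i)} < card {i \<in> V - x. \<not> half_integral (y i)}"
      using lp_solution_fewer_nonhalf[OF less.prems(2) refl] by blast
    show ?thesis
      by (rule less.hyps[OF z(3) _ z(1)]) (use less.prems(1) z(2) in force)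
  qed
qed

lemma LP_attained_half_integral:
  obtains y where "lp_feasible x y" "lp_objective x y = LP n E w x"
    "\<And>i. i \<in> V - x \<Longrightarrow> half_integral (y i)"
proof -
  let ?A = "V - x"
  let ?restrict = "\<lambda>y i. if i \<in> ?A then y i else 0"
  define H where "H = {y. lp_feasible x y \<and> (\<forall>i\<in>?A. half_integral (y i)) \<and> (\<forall>i. i \<notin> ?A \<longrightarrow> y i = 0)}"
  have reduce: "\<exists>z\<in>H. lp_objective x z \<le> lp_objective x y" if y: "lp_feasible x y" for y
  proof -
    obtain z where z: "lp_feasible x z" "lp_objective x z \<le> lp_objective x y"
      "\<And>i. i \<in> ?A \<Longrightarrow> half_integral (z i)"
      using lp_solution_half_integral[OF y] by blast
    have "e \<subseteq> ?A" if "e \<in> uncovered E x" for e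
      using that graph unfolding uncovered_def is_graph_def by auto
    then have "lp_feasible x (?restrict z)"
      using z(1) unfolding lp_feasible_def by (auto simp: subset_iff cong: sum.cong)
    moreover have "lp_objective x (?restrict z) = lp_objective x z"
      unfolding lp_objective_def by (intro sum.cong) auto
    ultimately show ?thesis using z unfolding H_def by (intro bexI[of _ "?restrict z"]) auto
  qed
  have "H \<subseteq> (\<lambda>g i. if i \<in> ?A then g i else 0) ` (?A \<rightarrow>\<^sub>E {0, 1/2, 1})"
  proof
    fix y assume y: "y \<in> H"
    then have "y = (\<lambda>i. if i \<in> ?A then restrict y ?A i else 0)"
      "restrict y ?A \<in> ?A \<rightarrow>\<^sub>E {0, 1/2, 1}"
      unfolding H_def half_integral_def by auto
    then show "y \<in> (\<lambda>g i. if i \<in> ?A then g i else 0) ` (?A \<rightarrow>\<^sub>E {0, 1/2, 1})" by blast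
  qed
  then have "finite H" by (rule finite_subset) (intro finite_imageI finite_PiE; auto)
  moreover have "H \<noteq> {}" using reduce[OF lp_feasible_one] by blast
  ultimately obtain y where y: "y \<in> H" and least: "\<And>z. z \<in> H \<Longrightarrow> lp_objective x y \<le> lp_objective x z"
    using arg_min_if_finite[of H "lp_objective x"] by (meson not_le)
  have "lp_objective x y \<le> LP n E w x"
    using reduce least by (intro LP_greatest) (meson order_trans)
  moreover have "LP n E w x \<le> lp_objective x y" using y unfolding H_def by (auto intro: LP_le_objective)
  ultimately show ?thesis using that y unfolding H_def by auto
qed

lemma LP_drop_at_heaviest_vertex:
  assumes LP_ge_1: "1 \<le> LP n E w x"
  obtains i where "i < n" "i \<notin> x"
    "real (w i) \<le> 2 * (LP n E w x - LP n E w (insert i x))"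
    "LP n E w x \<le> real n * (LP n E w x - LP n E w (insert i x))"
proof -
  let ?A = "V - x"
  obtain y where y: "lp_feasible x y" "lp_objective x y = LP n E w x"
    and half: "\<And>i. i \<in> ?A \<Longrightarrow> half_integral (y i)"
    using LP_attained_half_integral[of x] by blast
  have y0: "0 \<le> y i" for i using y(1) unfolding lp_feasible_def by auto
  have "?A \<noteq> {}"
  proof
    assume "?A = {}"
    then have "lp_objective x y = 0" unfolding lp_objective_def by (simp only: sum.empty)
    with y(2) LP_ge_1 show False by simp
  qed
  then obtain i where i: "i \<in> ?A"
    and heaviest: "\<And>j. j \<in> ?A \<Longrightarrow> real (w j) * y j \<le> real (w i) * y i"
    using arg_min_if_finite[of ?A "\<lambda>j. - (real (w j) * y j)"] by (auto simp: not_less)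
  have "LP n E w x = (\<Sum>j\<in>?A. real (w j) * y j)" using y(2) unfolding lp_objective_def by simp
  also have "\<dots> \<le> real (card ?A) * (real (w i) * y i)"
    using sum_bounded_above[of ?A "\<lambda>j. real (w j) * y j"] heaviest by simp
  also have "\<dots> \<le> real n * (real (w i) * y i)"
    using y0[of i] card_mono[of V ?A] by (intro mult_right_mono) auto
  finally have n_bound: "LP n E w x \<le> real n * (real (w i) * y i)" .
  have "0 < y i"
    using n_bound LP_ge_1 y0[of i] by (cases "y i = 0") auto
  then have half_le: "1/2 \<le> y i" using half[OF i] unfolding half_integral_def by auto
  have "LP n E w (insert i x) \<le> lp_objective (insert i x) y"
    by (rule LP_le_objective[OF lp_feasible_insert[OF y(1)]])
  also have "\<dots> = lp_objective x y - real (w i) * y i"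
  proof -
    have "V - insert i x = ?A - {i}" by auto
    then show ?thesis unfolding lp_objective_def using i by (simp add: sum_diff1)
  qed
  finally have drop: "real (w i) * y i \<le> LP n E w x - LP n E w (insert i x)" using y(2) by simp
  show ?thesis
  proof (rule that)
    show "i < n" "i \<notin> x" using i by auto
    show "real (w i) \<le> 2 * (LP n E w x - LP n E w (insert i x))"
      using drop mult_left_mono[OF half_le, of "real (w i)"] by simp
    show "LP n E w x \<le> real n * (LP n E w x - LP n E w (insert i x))"
      using n_bound drop by (meson mult_left_mono of_nat_0_le_iff order_trans)
  qed
qed

end

section \<open>Boxes and the population of DEMO\<close>

lemma cost_insert: "finite x \<Longrightarrow> i \<notin> x \<Longrightarrow> cost w (insert i x) = cost w x + w i"
  unfolding cost_def by simp

lemma cost_remove: "finite x \<Longrightarrow> i \<in> x \<Longrightarrow> real (cost w (x - {i})) = real (cost w x) - real (w i)"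
  unfolding cost_def by (simp add: sum_diff1_nat of_nat_diff member_le_sum)

locale demo_instance = weighted_graph +
  assumes n_ge_2: "2 \<le> n"
begin

abbreviation base :: real where "base \<equiv> 1 + 1 / (2 * real n)"

definition W_max :: nat where "W_max = Max (w ` V)"

definition cost_box :: "nat set \<Rightarrow> int" where
  "cost_box x = \<lceil>log base (1 + real (cost w x))\<rceil>"

definition lp_box :: "nat set \<Rightarrow> int" where
  "lp_box x = \<lceil>log base (1 + LP n E w x)\<rceil>"

definition box_bound :: int where
  "box_bound = \<lceil>log base (1 + real n * real W_max)\<rceil>"

definition score :: "nat set \<Rightarrow> real" where
  "score x = real (cost w x) + 2 * LP n E w x"

lemma box_eq: "box n E w x = (cost_box x, lp_box x)"
  unfolding box_def cost_box_def lp_box_def Let_def by simp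

lemma base_gt_1: "1 < base"
  using n_ge_2 by simp

lemma W_max_ge: "i < n \<Longrightarrow> w i \<le> W_max"
  unfolding W_max_def by simp

lemma W_max_ge_1: "1 \<le> W_max"
  using W_max_ge[of 0] weight_pos[of 0] n_ge_2 by simp

lemma cost_le_n_W_max:
  assumes "x \<subseteq> V"
  shows "real (cost w x) \<le> real n * real W_max"
proof -
  have "cost w x \<le> card x * W_max"
    unfolding cost_def using assms W_max_ge sum_bounded_above[of x w W_max] by (auto simp: subset_iff)
  also have "\<dots> \<le> n * W_max" using card_mono[OF _ assms] by simp
  finally show ?thesis by (metis of_nat_le_iff of_nat_mult)
qed

lemma LP_le_n_W_max: "LP n E w x \<le> real n * real W_max"
proof -
  have "LP n E w x \<le> (\<Sum>i\<in>V - x. real (w i))"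
    using LP_le_objective[OF lp_feasible_one] by (simp add: lp_objective_def)
  also have "\<dots> \<le> real (card (V - x)) * real W_max"
    using sum_bounded_above[of "V - x" "\<lambda>i. real (w i)" "real W_max"] W_max_ge by simp
  also have "\<dots> \<le> real n * real W_max" using card_mono[of V "V - x"] by (simp add: mult_right_mono)
  finally show ?thesis .
qed

lemma box_bound_nonneg: "0 \<le> box_bound"
  unfolding box_bound_def by (rule ceiling_log_one_plus_nonneg[OF base_gt_1]) simp

lemma cost_box_range:
  assumes "x \<subseteq> V"
  shows "0 \<le> cost_box x \<and> cost_box x \<le> box_bound"
  unfolding cost_box_def box_bound_def
  by (rule conjI[OF ceiling_log_one_plus_nonneg[OF base_gt_1 of_nat_0_le_iff]
        ceiling_log_one_plus_mono[OF base_gt_1 of_nat_0_le_iff cost_le_n_W_max[OF assms]]])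

lemma lp_box_range: "0 \<le> lp_box x \<and> lp_box x \<le> box_bound"
  unfolding lp_box_def box_bound_def
  by (rule conjI[OF ceiling_log_one_plus_nonneg[OF base_gt_1 LP_nonneg]
        ceiling_log_one_plus_mono[OF base_gt_1 LP_nonneg LP_le_n_W_max]])

lemma cost_box_mono: "cost w x \<le> cost w y \<Longrightarrow> cost_box x \<le> cost_box y"
  unfolding cost_box_def by (rule ceiling_log_one_plus_mono[OF base_gt_1]) auto

lemma lp_box_mono: "LP n E w x \<le> LP n E w y \<Longrightarrow> lp_box x \<le> lp_box y"
  unfolding lp_box_def by (rule ceiling_log_one_plus_mono[OF base_gt_1 LP_nonneg])

lemma cost_box_empty: "cost_box {} = 0"
  unfolding cost_box_def cost_def by simp

lemma cost_box_le_0: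
  assumes x: "x \<subseteq> V" and "cost_box x \<le> 0"
  shows "x = {}"
proof -
  have "real (cost w x) = 0"
    using ceiling_log_one_plus_le_0[OF base_gt_1 of_nat_0_le_iff] assms(2) unfolding cost_box_def .
  then have "cost w x = 0" by simp
  moreover have "finite x" using x finite_subset by blast
  ultimately have "\<forall>i\<in>x. w i = 0" unfolding cost_def by simp
  then show ?thesis using x weight_pos by (metis all_not_in_conv atLeastLessThan_iff less_irrefl subsetD)
qed

definition low_score :: "nat set \<Rightarrow> bool" where
  "low_score x \<longleftrightarrow> score x \<le> 2 * real (OPT n E w)"

definition valid_population :: "nat set set \<Rightarrow> bool" where
  "valid_population P \<longleftrightarrow> finite P \<and> P \<noteq> {} \<and> (\<forall>x\<in>P. x \<subseteq> V) \<and>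
     (\<forall>x\<in>P. \<forall>z\<in>P. x \<noteq> z \<longrightarrow> \<not> f_le n E w x z \<and> box n E w x \<noteq> box n E w z)"

lemma valid_populationD:
  assumes "valid_population P"
  shows "finite P" "P \<noteq> {}" "\<And>x. x \<in> P \<Longrightarrow> x \<subseteq> V"
  using assms unfolding valid_population_def by blast+

definition improves :: "nat set \<Rightarrow> nat set \<Rightarrow> bool" where
  "improves z y \<longleftrightarrow> f_le n E w z y \<or> (box n E w z = box n E w y \<and> score z \<le> score y)"

lemma improves_refl: "improves y y"
  unfolding improves_def f_le_def by simp

lemma improves_le:
  assumes "improves z y"
  shows "cost_box z \<le> cost_box y" "lp_box z \<le> lp_box y" "score z \<le> score y"
  using assms unfolding improves_def f_le_def box_eq score_def
  by (auto intro: cost_box_mono lp_box_mono)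

lemma update_improver:
  assumes "y \<in> insert x' P"
  shows "\<exists>z\<in>update n E w P x'. improves z y"
proof (cases "discard n E w P x'")
  case True
  then have U: "update n E w P x' = P" unfolding update_def by simp
  show ?thesis
  proof (cases "y \<in> P")
    case True
    then show ?thesis using U improves_refl by auto
  next
    case False
    with assms have "y = x'" by simp
    with \<open>discard n E w P x'\<close> show ?thesis
      unfolding U discard_def improves_def score_def by auto
  qed
next
  case False
  then have U: "update n E w P x'
      = insert x' {z\<in>P. z \<noteq> x' \<and> \<not> (f_le n E w x' z \<or> box n E w z = box n E w x')}"
    unfolding update_def by simp
  show ?thesis
  proof (cases "y \<in> update n E w P x'")
    case True
    then show ?thesis using improves_refl by blast
  next
    case y_removed: False
    with assms U have "f_le n E w x' y \<or> box n E w y = box n E w x'" and "y \<in> P" by auto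
    moreover have "\<not> (box n E w y = box n E w x' \<and> score y \<le> score x')"
      using False \<open>y \<in> P\<close> unfolding discard_def score_def by auto
    ultimately have "improves x' y" unfolding improves_def by auto
    then show ?thesis using U by blast
  qed
qed

lemma valid_population_update:
  assumes P: "valid_population P" and x': "x' \<subseteq> V"
  shows "valid_population (update n E w P x')"
proof (cases "discard n E w P x'")
  case True
  then show ?thesis using P unfolding update_def by simp
next
  case False
  define R where "R = {z\<in>P. z \<noteq> x' \<and> \<not> (f_le n E w x' z \<or> box n E w z = box n E w x')}"
  have U: "update n E w P x' = insert x' R" using False unfolding update_def R_def by simp
  \<comment> \<open>A survivor weakly dominating x' would either be dominated by x' (if f-equal) or would
      have caused x' to be discarded.\<close>
  have survivor: "\<not> f_le n E w z x' \<and> \<not> f_le n E w x' z \<and> box n E w z \<noteq> box n E w x'"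
    if "z \<in> R" for z
    using that False unfolding R_def discard_def f_eq_def f_le_def by auto
  have pairwise: "\<not> f_le n E w a b \<and> box n E w a \<noteq> box n E w b"
    if ab: "a \<in> insert x' R" "b \<in> insert x' R" "a \<noteq> b" for a b
  proof -
    consider "a = x'" | "b = x'" | "a \<in> P" "b \<in> P" using ab unfolding R_def by auto
    then show ?thesis
    proof cases
      case 1
      then show ?thesis using ab survivor[of b] by auto
    next
      case 2
      then show ?thesis using ab survivor[of a] by auto
    next
      case 3
      then show ?thesis using P ab(3) unfolding valid_population_def by blast
    qed
  qed
  have "finite R" "\<forall>z\<in>R. z \<subseteq> V" using P unfolding R_def valid_population_def by auto
  then show ?thesis unfolding U valid_population_def using x' pairwise by blast
qed

lemma card_valid_population:
  assumes P: "valid_population P"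
  shows "card P \<le> nat (2 * box_bound + 1)"
proof -
  let ?g = "\<lambda>x. cost_box x - lp_box x"
  \<comment> \<open>Two mutually non-dominating points lie in distinct boxes ordered oppositely in the two
      coordinates, so their box differences differ.\<close>
  have inj: "inj_on ?g P"
  proof (rule inj_onI, rule ccontr)
    fix p q assume pq: "p \<in> P" "q \<in> P" "?g p = ?g q" "p \<noteq> q"
    then have incomparable: "\<not> f_le n E w p q" "\<not> f_le n E w q p"
      and "box n E w p \<noteq> box n E w q"
      using P unfolding valid_population_def by auto
    then have boxes: "cost_box p \<noteq> cost_box q \<or> lp_box p \<noteq> lp_box q" unfolding box_eq by simp
    from incomparable consider
        "cost w p < cost w q" "LP n E w q < LP n E w p"
      | "cost w q < cost w p" "LP n E w p < LP n E w q"
      unfolding f_le_def by linarith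
    then show False
    proof cases
      case 1
      then have "cost_box p \<le> cost_box q" "lp_box q \<le> lp_box p"
        by (auto intro: cost_box_mono lp_box_mono)
      then show False using pq(3) boxes by linarith
    next
      case 2
      then have "cost_box q \<le> cost_box p" "lp_box p \<le> lp_box q"
        by (auto intro: cost_box_mono lp_box_mono)
      then show False using pq(3) boxes by linarith
    qed
  qed
  have range: "?g ` P \<subseteq> {-box_bound..box_bound}"
  proof
    fix t assume "t \<in> ?g ` P"
    then obtain p where p: "p \<in> P" "t = ?g p" by blast
    then have "p \<subseteq> V" using P unfolding valid_population_def by blast
    then show "t \<in> {-box_bound..box_bound}"
      using p(2) cost_box_range[of p] lp_box_range[of p] by auto
  qed
  have "card P = card (?g ` P)" using inj by (simp add: card_image)
  also have "\<dots> \<le> card {-box_bound..box_bound}" using range by (intro card_mono) simp_all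
  finally show ?thesis using box_bound_nonneg by simp
qed

lemma Min_update_le:
  fixes f :: "nat set \<Rightarrow> int"
  assumes P: "valid_population P" and x': "x' \<subseteq> V" and y: "y \<in> insert x' P" "Q y"
    and Q: "\<And>z. improves z y \<Longrightarrow> Q z" and f: "\<And>z. improves z y \<Longrightarrow> f z \<le> f y"
  shows "Min (f ` {z \<in> update n E w P x'. Q z}) \<le> f y"
proof -
  obtain z where z: "z \<in> update n E w P x'" "improves z y" using update_improver[OF y(1)] by blast
  have "finite (update n E w P x')" by (rule valid_populationD(1)[OF valid_population_update[OF P x']])
  then have "Min (f ` {z \<in> update n E w P x'. Q z}) \<le> f z" using z Q by (intro Min_le) auto
  also have "\<dots> \<le> f y" using f z(2) .
  finally show ?thesis .
qed

lemma low_score_empty: "low_score {}"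
  unfolding low_score_def score_def using LP_empty_le_OPT by (simp add: cost_def)

lemma goal_if_low_score_and_LP_0:
  assumes "x \<in> P" "x \<subseteq> V" "low_score x" "LP n E w x = 0"
  shows "goal n E w P"
proof -
  have "uncovered E x = {}" using LP_ge_1_if_uncovered[of x] assms(4) by fastforce
  then have "is_vertex_cover n E x" using assms(2) unfolding is_vertex_cover_def uncovered_def by auto
  moreover have "cost w x \<le> 2 * OPT n E w" using assms(3,4) unfolding low_score_def score_def by simp
  ultimately show ?thesis using assms(1) unfolding goal_def by blast
qed

subsection \<open>Potential and expected time\<close>

text \<open>
  The shift by box_bound + 1 puts every value taken before the empty set is found above every
  value taken afterwards, so finding the empty set is progress.
\<close>

definition potential :: "nat set set \<Rightarrow> nat" where
  "potential P = (if {} \<in> P then nat (Min (lp_box ` {x \<in> P. low_score x}))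
     else nat (box_bound + 1 + Min (cost_box ` P)))"

lemma Min_cost_box_range:
  assumes P: "valid_population P"
  shows "0 \<le> Min (cost_box ` P) \<and> Min (cost_box ` P) \<le> box_bound"
proof -
  obtain z where "z \<in> P" "Min (cost_box ` P) = cost_box z"
    using Min_image_attained[OF valid_populationD(1) valid_populationD(2)] P by metis
  then show ?thesis using cost_box_range valid_populationD(3)[OF P] by metis
qed

lemma Min_lp_box_low_score_range:
  assumes P: "valid_population P" and "{} \<in> P"
  shows "0 \<le> Min (lp_box ` {x \<in> P. low_score x}) \<and> Min (lp_box ` {x \<in> P. low_score x}) \<le> box_bound"
proof -
  let ?G = "{x \<in> P. low_score x}"
  have G: "finite ?G" "{} \<in> ?G" using valid_populationD(1)[OF P] assms(2) low_score_empty by auto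
  then have "0 \<le> Min (lp_box ` ?G)" using lp_box_range by (subst Min_ge_iff) auto
  moreover have "Min (lp_box ` ?G) \<le> lp_box {}" using G by (intro Min_le) auto
  ultimately show ?thesis using lp_box_range[of "{}"] by linarith
qed

lemma empty_in_update:
  assumes P: "valid_population P" and x': "x' \<subseteq> V" and "{} \<in> P"
  shows "{} \<in> update n E w P x'"
proof -
  obtain z where z: "z \<in> update n E w P x'" "improves z {}"
    using update_improver[of "{}" x' P] assms(3) by blast
  have "z \<subseteq> V" using valid_populationD(3)[OF valid_population_update[OF P x'] z(1)] .
  moreover have "cost_box z \<le> 0" using improves_le(1)[OF z(2)] cost_box_empty by simp
  ultimately have "z = {}" by (rule cost_box_le_0)
  then show ?thesis using z(1) by simp
qed

lemma potential_le_box_bound: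
  "valid_population P \<Longrightarrow> {} \<in> P \<Longrightarrow> potential P \<le> nat box_bound"
  unfolding potential_def using Min_lp_box_low_score_range by (simp add: nat_mono)

lemma potential_gt_box_bound:
  "valid_population P \<Longrightarrow> {} \<notin> P \<Longrightarrow> nat box_bound < potential P"
  unfolding potential_def using Min_cost_box_range box_bound_nonneg by fastforce

lemma potential_le_max:
  assumes "valid_population P"
  shows "potential P \<le> nat (2 * box_bound + 1)"
proof (cases "{} \<in> P")
  case True
  then show ?thesis using potential_le_box_bound[OF assms] by simp
next
  case False
  have "box_bound + 1 + Min (cost_box ` P) \<le> 2 * box_bound + 1"
    using Min_cost_box_range[OF assms] by linarith
  with False show ?thesis unfolding potential_def by (simp add: nat_mono)
qed

lemma potential_update_le:
  assumes P: "valid_population P" and x': "x' \<subseteq> V"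
  shows "potential (update n E w P x') \<le> potential P"
proof -
  let ?U = "update n E w P x'"
  have U: "valid_population ?U" by (rule valid_population_update[OF P x'])
  consider "{} \<in> P" | "{} \<notin> P" "{} \<in> ?U" | "{} \<notin> P" "{} \<notin> ?U" by blast
  then show ?thesis
  proof cases
    case 1
    then have "{} \<in> ?U" by (rule empty_in_update[OF P x'])
    have "finite {x \<in> P. low_score x}" "{x \<in> P. low_score x} \<noteq> {}"
      using valid_populationD(1)[OF P] 1 low_score_empty by auto
    then obtain z where z: "z \<in> P" "low_score z" "Min (lp_box ` {x \<in> P. low_score x}) = lp_box z"
      by (metis (mono_tags, lifting) Min_image_attained mem_Collect_eq)
    have "Min (lp_box ` {x \<in> ?U. low_score x}) \<le> lp_box z"
      using z by (intro Min_update_le[OF P x']) (auto simp: low_score_def dest: improves_le)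
    then show ?thesis unfolding potential_def using 1 \<open>{} \<in> ?U\<close> z(3) by simp
  next
    case 2
    then show ?thesis using potential_le_box_bound[OF U] potential_gt_box_bound[OF P] by fastforce
  next
    case 3
    obtain z where z: "z \<in> P" "Min (cost_box ` P) = cost_box z"
      using Min_image_attained[OF valid_populationD(1) valid_populationD(2)] P by metis
    have "Min (cost_box ` {x \<in> ?U. True}) \<le> cost_box z"
      using z by (intro Min_update_le[OF P x']) (auto dest: improves_le)
    then show ?thesis unfolding potential_def using 3 z(2) by simp
  qed
qed

lemma potential_decrease_by_insertion:
  assumes P: "valid_population P" and empty: "{} \<in> P" and not_goal: "\<not> goal n E w P"
  obtains x i where "x \<in> P" "i < n" "potential (update n E w P (flip n x i)) < potential P"
proof -
  let ?G = "{x \<in> P. low_score x}"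
  have "finite ?G" "?G \<noteq> {}" using valid_populationD(1)[OF P] empty low_score_empty by auto
  then obtain z where z: "z \<in> P" "low_score z" "Min (lp_box ` ?G) = lp_box z"
    by (metis (mono_tags, lifting) Min_image_attained mem_Collect_eq)
  have zV: "z \<subseteq> V" using valid_populationD(3)[OF P z(1)] .
  have "LP n E w z \<noteq> 0" using goal_if_low_score_and_LP_0[OF z(1) zV z(2)] not_goal by blast
  then have LP_z: "1 \<le> LP n E w z" using LP_eq_0_if_covered LP_ge_1_if_uncovered by blast
  obtain i where i: "i < n" "i \<notin> z"
    "real (w i) \<le> 2 * (LP n E w z - LP n E w (insert i z))"
    "LP n E w z \<le> real n * (LP n E w z - LP n E w (insert i z))"
    by (rule LP_drop_at_heaviest_vertex[OF LP_z])
  let ?x = "insert i z"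
  have xV: "?x \<subseteq> V" using zV i(1) by simp
  have "score ?x \<le> score z"
    unfolding score_def using cost_insert[OF finite_subset[OF zV] i(2)] i(3) by simp
  then have low: "low_score ?x" using z(2) unfolding low_score_def by simp
  have drop: "lp_box ?x \<le> lp_box z - 1"
    unfolding lp_box_def by (rule ceiling_log_decrease) (use n_ge_2 LP_z LP_nonneg i(4) in auto)
  let ?U = "update n E w P ?x"
  have U: "valid_population ?U" "{} \<in> ?U"
    using valid_population_update[OF P xV] empty_in_update[OF P xV empty] .
  have "Min (lp_box ` {x \<in> ?U. low_score x}) \<le> lp_box ?x"
    using low by (intro Min_update_le[OF P xV]) (auto simp: low_score_def dest: improves_le)
  moreover have "0 \<le> Min (lp_box ` {x \<in> ?U. low_score x})"
    using Min_lp_box_low_score_range[OF U] by blast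
  ultimately have "potential ?U < potential P"
    unfolding potential_def using U(2) empty z(3) drop by simp
  then show ?thesis using that z(1) i(1) flip_insert[OF zV i(1,2)] by metis
qed

lemma potential_decrease_by_removal:
  assumes P: "valid_population P" and no_empty: "{} \<notin> P"
  obtains x i where "x \<in> P" "i < n" "potential (update n E w P (flip n x i)) < potential P"
proof -
  obtain z where z: "z \<in> P" "Min (cost_box ` P) = cost_box z"
    using Min_image_attained[OF valid_populationD(1) valid_populationD(2)] P by metis
  have zV: "z \<subseteq> V" using valid_populationD(3)[OF P z(1)] .
  have "z \<noteq> {}" "finite z" using z(1) no_empty finite_subset[OF zV] by auto
  then have "Max (w ` z) \<in> w ` z" by (intro Max_in) auto
  then obtain i where i: "i \<in> z" "w i = Max (w ` z)" by auto
  have "i < n" using i(1) zV by auto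
  have "cost w z \<le> card z * w i"
    unfolding cost_def using sum_bounded_above[of z w "w i"] i \<open>finite z\<close> by simp
  also have "\<dots> \<le> n * w i" using card_mono[OF _ zV] by simp
  finally have cost_z: "real (cost w z) \<le> real n * real (w i)" by (metis of_nat_le_iff of_nat_mult)
  have "w i \<le> cost w z" unfolding cost_def using i(1) \<open>finite z\<close> by (simp add: member_le_sum)
  then have "1 \<le> cost w z" using weight_pos[OF \<open>i < n\<close>] by linarith
  let ?x = "z - {i}"
  have xV: "?x \<subseteq> V" using zV by auto
  have cost_x: "real (cost w ?x) = real (cost w z) - real (w i)"
    by (rule cost_remove[OF \<open>finite z\<close> i(1)])
  have drop: "cost_box ?x \<le> cost_box z - 1"
    unfolding cost_box_def by (rule ceiling_log_decrease) (use n_ge_2 \<open>1 \<le> cost w z\<close> cost_x cost_z in auto)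
  let ?U = "update n E w P ?x"
  have U: "valid_population ?U" by (rule valid_population_update[OF P xV])
  have "potential ?U < potential P"
  proof (cases "{} \<in> ?U")
    case True
    then show ?thesis
      using potential_le_box_bound[OF U] potential_gt_box_bound[OF P no_empty] by simp
  next
    case False
    have "Min (cost_box ` {x \<in> ?U. True}) \<le> cost_box ?x"
      by (intro Min_update_le[OF P xV]) (auto dest: improves_le)
    then show ?thesis
      unfolding potential_def using False no_empty z(2) drop Min_cost_box_range[OF U] by simp
  qed
  then show ?thesis using that z(1) \<open>i < n\<close> flip_remove[OF zV i(1)] by metis
qed

lemma potential_decrease:
  assumes "valid_population P" "\<not> goal n E w P"
  obtains x i where "x \<in> P" "i < n" "potential (update n E w P (flip n x i)) < potential P"
  using potential_decrease_by_insertion[OF assms(1) _ assms(2)] potential_decrease_by_removal[OF assms(1)]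
  by blast

lemma demo_step_eq:
  "demo_step n E w P = pmf_of_set P \<bind> (\<lambda>x. map_pmf (update n E w P) (mutate n x))"
  unfolding demo_step_def map_pmf_def by simp

lemma demo_step_support:
  assumes P: "valid_population P" and Q: "Q \<in> set_pmf (demo_step n E w P)"
  obtains x' where "x' \<subseteq> V" "Q = update n E w P x'"
proof -
  obtain x x' where "x \<in> P" "x' \<in> set_pmf (mutate n x)" "Q = update n E w P x'"
    using Q valid_populationD(1,2)[OF P] unfolding demo_step_eq by auto
  moreover have "set_pmf (mutate n x) \<subseteq> Pow V" unfolding mutate_def by auto
  ultimately show ?thesis using that by blast
qed

lemma demo_pop_valid: "P \<in> set_pmf (demo_pop n E w t) \<Longrightarrow> valid_population P"
proof (induction t arbitrary: P)
  case 0
  have "set_pmf (pmf_of_set (Pow V)) = Pow V" by (rule set_pmf_of_set) auto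
  then show ?case using 0 by (auto simp: demo_init_def valid_population_def)
next
  case (Suc t)
  then obtain P0 where P0: "P0 \<in> set_pmf (demo_pop n E w t)" "P \<in> set_pmf (stopped_step n E w P0)"
    by auto
  have P0_valid: "valid_population P0" by (rule Suc.IH[OF P0(1)])
  show ?case
  proof (cases "goal n E w P0")
    case True
    then show ?thesis using P0(2) P0_valid unfolding stopped_step_def by simp
  next
    case False
    then obtain x' where "x' \<subseteq> V" "P = update n E w P0 x'"
      using P0(2) demo_step_support[OF P0_valid] unfolding stopped_step_def by auto
    then show ?thesis using valid_population_update[OF P0_valid] by simp
  qed
qed

definition progress_prob :: real where
  "progress_prob = exp (-2) / (real n * real (nat (2 * box_bound + 1)))"

lemma progress_prob_pos: "0 < progress_prob"
  unfolding progress_prob_def using n_ge_2 box_bound_nonneg by simp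

lemma demo_step_progress:
  assumes P: "valid_population P" and not_goal: "\<not> goal n E w P"
  shows "progress_prob \<le> measure_pmf.prob (demo_step n E w P) {Q. potential Q < potential P}"
proof -
  obtain x i where x: "x \<in> P" "i < n" and less: "potential (update n E w P (flip n x i)) < potential P"
    by (rule potential_decrease[OF P not_goal])
  let ?Q = "update n E w P (flip n x i)"
  let ?D = "demo_step n E w P"
  have fin: "finite P" "P \<noteq> {}" using valid_populationD(1,2)[OF P] .
  have card: "1 \<le> card P" "card P \<le> nat (2 * box_bound + 1)"
    using fin card_valid_population[OF P] by (auto simp: Suc_le_eq card_gt_0_iff)
  have "exp (-2) / real n \<le> pmf (mutate n x) (flip n x i)"
    by (rule pmf_mutate_flip_ge[OF n_ge_2 x(2)])
  also have "\<dots> = measure_pmf.prob (mutate n x) {flip n x i}" by (simp add: measure_pmf_single)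
  also have "\<dots> \<le> measure_pmf.prob (mutate n x) (update n E w P -` {?Q})"
    by (rule measure_pmf.finite_measure_mono) auto
  also have "\<dots> = pmf (map_pmf (update n E w P) (mutate n x)) ?Q" by (simp add: pmf_map)
  finally have mutation: "exp (-2) / real n \<le> pmf (map_pmf (update n E w P) (mutate n x)) ?Q" .
  have "progress_prob \<le> (exp (-2) / real n) / real (card P)"
    unfolding progress_prob_def using card n_ge_2 by (simp add: divide_left_mono)
  also have "\<dots> \<le> pmf (map_pmf (update n E w P) (mutate n x)) ?Q / real (card P)"
    by (rule divide_right_mono[OF mutation]) simp
  also have "\<dots> \<le> (\<Sum>y\<in>P. pmf (map_pmf (update n E w P) (mutate n y)) ?Q) / real (card P)"
    using x(1) fin(1) by (intro divide_right_mono member_le_sum) auto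
  also have "\<dots> = pmf ?D ?Q"
    unfolding demo_step_eq by (rule pmf_bind_pmf_of_set[OF fin(2,1), symmetric])
  also have "\<dots> \<le> measure_pmf.prob ?D {Q. potential Q < potential P}"
    unfolding measure_pmf_single[symmetric] using less by (intro measure_pmf.finite_measure_mono) auto
  finally show ?thesis .
qed

lemma stopped_step_drift:
  assumes P: "valid_population P"
  shows "(\<integral>\<^sup>+Q. ennreal (real (potential Q) / progress_prob) \<partial>stopped_step n E w P)
      + indicator {P. \<not> goal n E w P} P \<le> ennreal (real (potential P) / progress_prob)"
proof (cases "goal n E w P")
  case True
  then show ?thesis unfolding stopped_step_def by simp
next
  case False
  have "(\<integral>\<^sup>+Q. ennreal (real (potential Q) / progress_prob) \<partial>demo_step n E w P) + 1
      \<le> ennreal (real (potential P) / progress_prob)"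
  proof (rule drift_from_progress[OF _ demo_step_progress[OF P False] progress_prob_pos])
    fix Q assume "Q \<in> set_pmf (demo_step n E w P)"
    then show "potential Q \<le> potential P"
      using potential_update_le[OF P] by (auto elim: demo_step_support[OF P])
  qed
  then show ?thesis unfolding stopped_step_def using False by simp
qed

lemma expected_time_le:
  "expected_time n E w \<le> ennreal (exp 2 * real n * real (nat (2 * box_bound + 1)) ^ 2)"
proof -
  let ?h = "\<lambda>P. ennreal (real (potential P) / progress_prob)"
  have "expected_time n E w \<le> (\<integral>\<^sup>+P. ?h P \<partial>demo_pop n E w 0)"
    unfolding expected_time_def
    by (rule hitting_time_le_initial_potential) (auto intro: stopped_step_drift demo_pop_valid)
  also have "\<dots> \<le> (\<integral>\<^sup>+P. ennreal (real (nat (2 * box_bound + 1)) / progress_prob) \<partial>demo_pop n E w 0)"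
    using potential_le_max[OF demo_pop_valid[of _ 0]] progress_prob_pos
    by (intro nn_integral_mono_AE AE_pmfI ennreal_leI divide_right_mono) auto
  also have "\<dots> = ennreal (exp 2 * real n * real (nat (2 * box_bound + 1)) ^ 2)"
    unfolding progress_prob_def using n_ge_2 box_bound_nonneg
    by (simp add: measure_pmf.emeasure_space_1 exp_minus power2_eq_square field_simps)
  finally show ?thesis .
qed

lemma box_count_le: "real (nat (2 * box_bound + 1)) \<le> 15 * real n * (ln (real n) + ln (real W_max))"
proof -
  let ?L = "ln (real n) + ln (real W_max)"
  have ln_2: "ln 2 \<le> ln (real n)" using n_ge_2 by simp
  moreover have "1/2 \<le> ln (2::real)" using ln_add1_ge[of 1] by simp
  ultimately have ln_n: "1/2 \<le> ln (real n)" by linarith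
  have ln_W: "0 \<le> ln (real W_max)" using W_max_ge_1 by simp
  have "1 * 1 \<le> real n * real W_max" using n_ge_2 W_max_ge_1 by (intro mult_mono) auto
  then have nW: "1 \<le> real n * real W_max" by simp
  have "ln (1 + real n * real W_max) \<le> ln (2 * (real n * real W_max))" using nW by simp
  also have "\<dots> = ln 2 + ?L" using n_ge_2 W_max_ge_1 by (simp add: ln_mult)
  also have "\<dots> \<le> 2 * ?L" using ln_2 ln_W by simp
  finally have ln_nW: "ln (1 + real n * real W_max) \<le> 2 * ?L" .
  have "log base (1 + real n * real W_max) \<le> 3 * real n * ln (1 + real n * real W_max)"
    using log_one_plus_half_inverse_le[of "real n" "1 + real n * real W_max"] n_ge_2 nW by simp
  also have "\<dots> \<le> 3 * real n * (2 * ?L)" using ln_nW by (intro mult_left_mono) auto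
  finally have "real_of_int box_bound \<le> 6 * real n * ?L + 1" unfolding box_bound_def by linarith
  moreover have "2 * (1/2) \<le> real n * ?L" using n_ge_2 ln_n ln_W by (intro mult_mono) auto
  ultimately show ?thesis using box_bound_nonneg by simp
qed

end

theorem theorem4:
  "\<exists>C N. \<forall>n E w. n \<ge> N \<longrightarrow> is_graph n E \<longrightarrow> (\<forall>i<n. w i > 0) \<longrightarrow>
     expected_time n E w
       \<le> ennreal (C * real n ^ 3 * (ln (real n) + ln (real (Max (w ` {0..<n})))) ^ 2)"
proof (intro exI allI impI)
  fix n E and w :: "nat \<Rightarrow> nat"
  assume "2 \<le> n" "is_graph n E" "\<forall>i<n. w i > 0"
  then interpret demo_instance n E w by unfold_locales auto
  let ?L = "ln (real n) + ln (real W_max)"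
  have "exp 2 * real n * real (nat (2 * box_bound + 1)) ^ 2 \<le> exp 2 * real n * (15 * real n * ?L) ^ 2"
    using box_count_le by (intro mult_left_mono power_mono) auto
  also have "\<dots> = (225 * exp 2) * real n ^ 3 * ?L ^ 2" by (simp add: power2_eq_square power3_eq_cube)
  finally show "expected_time n E w \<le> ennreal (225 * exp 2 * real n ^ 3 * (ln (real n) + ln (real (Max (w ` V)))) ^ 2)"
    using expected_time_le unfolding W_max_def by (meson ennreal_leI order_trans)
qed

end
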